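(* Let $S$ be a finite set of distinct lines in the plane, each having one of three distinct slopes. Consider the greedy algorithm that first repeatedly chooses (in any order) a point lying on three not-yet-hit lines of $S$ (necessarily one of each slope) and marks these three lines as hit, until no such point exists; and then, on the remaining unhit lines (no three of which are concurrent), repeatedly chooses a point at which two unhit lines cross, taking the two lines from the two slope classes currently having the largest numbers of unhit lines, and marks them as hit, until no two unhit lines cross; and finally places one point on each remaining unhit line. The number of points chosen by this algorithm is at most $\frac{7}{5}$ times the minimum cardinality of a hitting set for $S$.
   Context: A hitting set for a set of lines is a finite set of points such that every line contains at least one of the points. *)

theory Defs
  imports Main "HOL.Real"
begin

type_synonym point = "real \<times> real"
type_synonym line = "point set"

definition is_line :: "line \<Rightarrow> bool" where
  "is_line L \<longleftrightarrow> (\<exists>a b c. (a \<noteq> 0 \<or> b \<noteq> 0) \<and> L = {p. a * fst p + b * snd p = c})"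

text \<open>The slope (direction) of a line: the set of translation vectors preserving it.
  Two lines have the same slope iff they are parallel.\<close>
definition slope :: "line \<Rightarrow> point set" where
  "slope L = {v. \<forall>p\<in>L. (fst p + fst v, snd p + snd v) \<in> L}"

definition hitting_set :: "line set \<Rightarrow> point set \<Rightarrow> bool" where
  "hitting_set S H \<longleftrightarrow> finite H \<and> (\<forall>L\<in>S. \<exists>p\<in>H. p \<in> L)"

definition hitting_number :: "line set \<Rightarrow> nat" where
  "hitting_number S = (LEAST k. \<exists>H. hitting_set S H \<and> card H = k)"

definition cnt :: "line set \<Rightarrow> point set \<Rightarrow> nat" where
  "cnt U d = card {L\<in>U. slope L = d}"

definition step1 :: "line set \<times> point list \<Rightarrow> line set \<times> point list \<Rightarrow> bool" where
  "step1 s t \<longleftrightarrow> (\<exists>p L1 L2 L3. L1 \<in> fst s \<and> L2 \<in> fst s \<and> L3 \<in> fst s \<and>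
      L1 \<noteq> L2 \<and> L1 \<noteq> L3 \<and> L2 \<noteq> L3 \<and> p \<in> L1 \<and> p \<in> L2 \<and> p \<in> L3 \<and>
      t = (fst s - {L1, L2, L3}, snd s @ [p]))"

definition final1 :: "line set \<Rightarrow> bool" where
  "final1 U \<longleftrightarrow> \<not> (\<exists>p L1 L2 L3. L1 \<in> U \<and> L2 \<in> U \<and> L3 \<in> U \<and>
      L1 \<noteq> L2 \<and> L1 \<noteq> L3 \<and> L2 \<noteq> L3 \<and> p \<in> L1 \<and> p \<in> L2 \<and> p \<in> L3)"

text \<open>Phase 2 step: a crossing point of two unhit lines taken from two slope classes
  having the largest numbers of unhit lines (ties broken arbitrarily): every other
  slope class has at most as many unhit lines as each of the two chosen classes.\<close>
definition step2 :: "line set \<times> point list \<Rightarrow> line set \<times> point list \<Rightarrow> bool" where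
  "step2 s t \<longleftrightarrow> (\<exists>p L1 L2. L1 \<in> fst s \<and> L2 \<in> fst s \<and> L1 \<noteq> L2 \<and>
      slope L1 \<noteq> slope L2 \<and> p \<in> L1 \<and> p \<in> L2 \<and>
      (\<forall>L\<in>fst s. slope L \<noteq> slope L1 \<and> slope L \<noteq> slope L2 \<longrightarrow>
          cnt (fst s) (slope L) \<le> cnt (fst s) (slope L1) \<and>
          cnt (fst s) (slope L) \<le> cnt (fst s) (slope L2)) \<and>
      t = (fst s - {L1, L2}, snd s @ [p]))"

definition final2 :: "line set \<Rightarrow> bool" where
  "final2 U \<longleftrightarrow> \<not> (\<exists>p L1 L2. L1 \<in> U \<and> L2 \<in> U \<and> L1 \<noteq> L2 \<and> p \<in> L1 \<and> p \<in> L2)"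

definition greedy_output :: "line set \<Rightarrow> point list \<Rightarrow> bool" where
  "greedy_output S pts \<longleftrightarrow> (\<exists>U1 P1 U2 P2 (f :: line \<Rightarrow> point) xs.
      step1\<^sup>*\<^sup>* (S, []) (U1, P1) \<and> final1 U1 \<and>
      step2\<^sup>*\<^sup>* (U1, P1) (U2, P2) \<and> final2 U2 \<and>
      distinct xs \<and> set xs = U2 \<and> (\<forall>L\<in>U2. f L \<in> L) \<and>
      pts = P2 @ map f xs)"

end

theory Submission
  imports Defs
begin

text \<open>Fix an optimal hitting set \<open>H\<close> and let \<open>Q\<close> be the set of triple points chosen in the first
  phase; their line triples are pairwise disjoint. Every line through a point of \<open>Q - H\<close>, and
  every line left unhit by the first phase, is hit by a point of \<open>H - Q\<close>. Such a point lies on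
  at most three lines, and on at most two unhit ones, so with \<open>n\<close> unhit lines,
  \<open>b = |Q - H|\<close> and \<open>K = |H - Q|\<close> we get \<open>n + 3b \<le> 3K\<close>, \<open>n \<le> 2K\<close>, and \<open>K \<ge> 3\<close> if \<open>b > 0\<close>.
  Parallel lines are hit by distinct points of \<open>H\<close>, and each triple point hits one line of every
  slope, so each slope class keeps at most \<open>|H| - |Q|\<close> unhit lines. Since the second phase
  always takes lines from the two largest classes, the second and third phases together choose
  at most \<open>max (|H| - |Q|) \<lceil>n/2\<rceil>\<close> points, and the ratio \<open>7/5\<close> is then a matter of arithmetic.\<close>

section \<open>Lines in the plane\<close>

lemma line_eq_nonempty:
  fixes a b c :: real
  assumes "a \<noteq> 0 \<or> b \<noteq> 0"
  shows "\<exists>p. a * fst p + b * snd p = c"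
proof (cases "a = 0")
  case True
  with assms show ?thesis by (intro exI[of _ "(0, c / b)"]) simp
next
  case False
  then show ?thesis by (intro exI[of _ "(c / a, 0)"]) simp
qed

lemma slope_line_eq:
  fixes a b c :: real
  assumes "a \<noteq> 0 \<or> b \<noteq> 0"
  shows "slope {p. a * fst p + b * snd p = c} = {v. a * fst v + b * snd v = 0}"
proof
  show "{v. a * fst v + b * snd v = 0} \<subseteq> slope {p. a * fst p + b * snd p = c}"
    by (auto simp: slope_def algebra_simps)
  show "slope {p. a * fst p + b * snd p = c} \<subseteq> {v. a * fst v + b * snd v = 0}"
  proof
    fix v assume v: "v \<in> slope {p. a * fst p + b * snd p = c}"
    obtain p where p: "a * fst p + b * snd p = c" using line_eq_nonempty[OF assms] by blast
    with v have "a * (fst p + fst v) + b * (snd p + snd v) = c" by (auto simp: slope_def)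
    with p show "v \<in> {v. a * fst v + b * snd v = 0}" by (simp add: algebra_simps)
  qed
qed

lemma is_lineE:
  assumes "is_line L"
  obtains a b c where "a \<noteq> 0 \<or> b \<noteq> 0" "L = {p. a * fst p + b * snd p = c}"
    "slope L = {v. a * fst v + b * snd v = 0}"
  using assms slope_line_eq unfolding is_line_def by blast

lemma line_nonempty: "is_line L \<Longrightarrow> \<exists>p. p \<in> L"
  unfolding is_line_def using line_eq_nonempty by blast

lemma line_point_slope:
  assumes "is_line L" "p \<in> L"
  shows "L = {q. (fst q - fst p, snd q - snd p) \<in> slope L}"
proof -
  obtain a b c where "L = {p. a * fst p + b * snd p = c}" "slope L = {v. a * fst v + b * snd v = 0}"
    using is_lineE[OF assms(1)] .
  with assms(2) show ?thesis by (auto simp: algebra_simps)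
qed

lemma line_eqI_slope:
  assumes "is_line L" "is_line L'" "p \<in> L" "p \<in> L'" "slope L = slope L'"
  shows "L = L'"
  using line_point_slope[OF assms(1,3)] line_point_slope[OF assms(2,4)] assms(5) by simp

lemma kernel_eq_collinear:
  fixes a b v1 v2 :: real
  assumes "a \<noteq> 0 \<or> b \<noteq> 0" "v1 \<noteq> 0 \<or> v2 \<noteq> 0" "a * v1 + b * v2 = 0"
  shows "{w. a * fst w + b * snd w = 0} = {w. v2 * fst w = v1 * snd w}"
proof -
  have "v2 * (a * w1 + b * w2) = a * (v2 * w1 - v1 * w2)"
    and "v1 * (a * w1 + b * w2) = - b * (v2 * w1 - v1 * w2)" for w1 w2
  proof -
    have "v2 * (a * w1 + b * w2) = a * (v2 * w1 - v1 * w2) + w2 * (a * v1 + b * v2)"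
      and "v1 * (a * w1 + b * w2) = - b * (v2 * w1 - v1 * w2) + w1 * (a * v1 + b * v2)"
      by (simp_all add: algebra_simps)
    with assms(3) show "v2 * (a * w1 + b * w2) = a * (v2 * w1 - v1 * w2)"
      and "v1 * (a * w1 + b * w2) = - b * (v2 * w1 - v1 * w2)" by simp_all
  qed
  note identities = this
  have "a * w1 + b * w2 = 0 \<longleftrightarrow> v2 * w1 = v1 * w2" for w1 w2
  proof
    assume "a * w1 + b * w2 = 0"
    then have "a * (v2 * w1 - v1 * w2) = 0" "b * (v2 * w1 - v1 * w2) = 0"
      using identities[of w1 w2] by simp_all
    with assms(1) show "v2 * w1 = v1 * w2" by auto
  next
    assume "v2 * w1 = v1 * w2"
    then have "v2 * (a * w1 + b * w2) = 0" "v1 * (a * w1 + b * w2) = 0"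
      using identities[of w1 w2] by simp_all
    with assms(2) show "a * w1 + b * w2 = 0" by auto
  qed
  then show ?thesis by auto
qed

lemma line_eqI_two_points:
  assumes "is_line L" "is_line L'" "p \<in> L" "p \<in> L'" "q \<in> L" "q \<in> L'" "p \<noteq> q"
  shows "L = L'"
proof -
  define v1 v2 where "v1 = fst q - fst p" and "v2 = snd q - snd p"
  have v: "v1 \<noteq> 0 \<or> v2 \<noteq> 0" using \<open>p \<noteq> q\<close> unfolding v1_def v2_def by (auto simp: prod_eq_iff)
  have "slope M = {w. v2 * fst w = v1 * snd w}" if "is_line M" "p \<in> M" "q \<in> M" for M
  proof -
    obtain a b c where M: "a \<noteq> 0 \<or> b \<noteq> 0" "M = {p. a * fst p + b * snd p = c}"
      "slope M = {v. a * fst v + b * snd v = 0}" using is_lineE[OF \<open>is_line M\<close>] .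
    have "a * v1 + b * v2 = 0" using that M(2) unfolding v1_def v2_def by (simp add: algebra_simps)
    with M(1,3) v show ?thesis using kernel_eq_collinear by simp
  qed
  with assms have "slope L = slope L'" by simp
  with assms show ?thesis using line_eqI_slope by blast
qed

lemma lines_meet_if_slope_ne:
  assumes "is_line L" "is_line L'" "slope L \<noteq> slope L'"
  shows "\<exists>p. p \<in> L \<and> p \<in> L'"
proof -
  obtain a b c where L: "a \<noteq> 0 \<or> b \<noteq> 0" "L = {p. a * fst p + b * snd p = c}"
    "slope L = {v. a * fst v + b * snd v = 0}" using is_lineE[OF assms(1)] .
  obtain a' b' c' where L': "a' \<noteq> 0 \<or> b' \<noteq> 0" "L' = {p. a' * fst p + b' * snd p = c'}"
    "slope L' = {v. a' * fst v + b' * snd v = 0}" using is_lineE[OF assms(2)] .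
  have D: "a * b' - a' * b \<noteq> 0"
  proof
    assume "a * b' - a' * b = 0"
    then have "a * (- b) + b * a = 0" "a' * (- b) + b' * a = 0" by (simp_all add: algebra_simps)
    moreover have "- b \<noteq> 0 \<or> a \<noteq> 0" using L(1) by auto
    ultimately have "slope L = {w. a * fst w = - b * snd w}" "slope L' = {w. a * fst w = - b * snd w}"
      using kernel_eq_collinear L(1,3) L'(1,3) by presburger+
    then have "slope L = slope L'" by simp
    with assms(3) show False ..
  qed
  define x y where "x = (c * b' - c' * b) / (a * b' - a' * b)"
    and "y = (a * c' - a' * c) / (a * b' - a' * b)"
  have "a * x + b * y = (a * (c * b' - c' * b) + b * (a * c' - a' * c)) / (a * b' - a' * b)"
    and "a' * x + b' * y = (a' * (c * b' - c' * b) + b' * (a * c' - a' * c)) / (a * b' - a' * b)"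
    unfolding x_def y_def by (simp_all add: add_divide_distrib)
  moreover have "a * (c * b' - c' * b) + b * (a * c' - a' * c) = c * (a * b' - a' * b)"
    and "a' * (c * b' - c' * b) + b' * (a * c' - a' * c) = c' * (a * b' - a' * b)"
    by (simp_all add: algebra_simps)
  ultimately have "a * x + b * y = c" "a' * x + b' * y = c'" using D by simp_all
  with L(2) L'(2) show ?thesis by auto
qed

section \<open>The second phase\<close>

lemma card_le_mult_card_if_covered:
  assumes "finite A" "\<And>a. a \<in> A \<Longrightarrow> finite (F a)" "\<And>a. a \<in> A \<Longrightarrow> card (F a) \<le> k"
    and "X \<subseteq> (\<Union>a\<in>A. F a)"
  shows "card X \<le> k * card A"
proof -
  have "card X \<le> card (\<Union>a\<in>A. F a)" using assms by (intro card_mono) auto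
  also have "\<dots> \<le> (\<Sum>a\<in>A. card (F a))" using assms(1) by (rule card_UN_le)
  also have "\<dots> \<le> k * card A" using assms(3) sum_bounded_above[of A "\<lambda>a. card (F a)" k]
    by (simp add: mult.commute)
  finally show ?thesis .
qed

lemma cnt_Diff: "cnt (U - A) d = card ({L\<in>U. slope L = d} - A)"
  unfolding cnt_def by (rule arg_cong[where f = card]) auto

lemma cnt_sum_le_card:
  assumes "finite U" "d1 \<noteq> d2" "d1 \<noteq> d3" "d2 \<noteq> d3"
  shows "cnt U d1 + cnt U d2 + cnt U d3 \<le> card U"
proof -
  let ?C = "\<lambda>d. {L\<in>U. slope L = d}"
  have "card (?C d1 \<union> ?C d2) = cnt U d1 + cnt U d2"
    using assms unfolding cnt_def by (intro card_Un_disjoint) auto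
  moreover have "card (?C d1 \<union> ?C d2 \<union> ?C d3) = card (?C d1 \<union> ?C d2) + cnt U d3"
    using assms unfolding cnt_def by (intro card_Un_disjoint) auto
  ultimately have "cnt U d1 + cnt U d2 + cnt U d3 = card (?C d1 \<union> ?C d2 \<union> ?C d3)" by simp
  also have "\<dots> \<le> card U" using assms(1) by (intro card_mono) auto
  finally show ?thesis .
qed

lemma card_eq_cnt_if_final2:
  assumes "final2 U" "\<forall>L\<in>U. is_line L" "L0 \<in> U"
  shows "card U = cnt U (slope L0)"
proof -
  have "slope L = slope L0" if "L \<in> U" for L
    using lines_meet_if_slope_ne[of L L0] assms that unfolding final2_def by blast
  then show ?thesis unfolding cnt_def by (metis (mono_tags, lifting) Collect_mem_eq Collect_cong)
qed

lemma step2_cnt_le: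
  assumes "step2 s t" "finite (fst s)" "\<forall>d. cnt (fst s) d \<le> m" "card (fst s) \<le> 2 * m"
  shows "cnt (fst t) d \<le> m - 1"
proof -
  obtain p L1 L2 where st: "L1 \<in> fst s" "L2 \<in> fst s" "L1 \<noteq> L2" "slope L1 \<noteq> slope L2"
      "\<forall>L\<in>fst s. slope L \<noteq> slope L1 \<and> slope L \<noteq> slope L2 \<longrightarrow>
          cnt (fst s) (slope L) \<le> cnt (fst s) (slope L1) \<and>
          cnt (fst s) (slope L) \<le> cnt (fst s) (slope L2)"
      "t = (fst s - {L1, L2}, snd s @ [p])"
    using assms(1) unfolding step2_def by blast
  let ?C = "{L\<in>fst s. slope L = d}"
  have t: "cnt (fst t) d = card (?C - {L1, L2})" using st(6) by (simp add: cnt_Diff)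
  show ?thesis
  proof (cases "d = slope L1 \<or> d = slope L2")
    case True
    then obtain L where "L \<in> ?C" "L \<in> {L1, L2}" using st(1,2) by auto
    then have "card (?C - {L1, L2}) \<le> card (?C - {L})"
      using assms(2) by (intro card_mono) auto
    also have "\<dots> = cnt (fst s) d - 1" using \<open>L \<in> ?C\<close> assms(2) unfolding cnt_def by simp
    finally show ?thesis using t assms(3) by (metis diff_le_mono le_trans)
  next
    case False
    then have "?C - {L1, L2} = ?C" by auto
    then have "cnt (fst t) d = cnt (fst s) d" using t unfolding cnt_def by simp
    moreover have "cnt (fst s) d < m" \<comment> \<open>otherwise three classes of \<open>\<ge> m\<close> lines fill \<open>\<le> 2m\<close> lines\<close>
    proof (rule ccontr)
      assume "\<not> cnt (fst s) d < m"
      have "2 \<le> card (fst s)"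
        using card_mono[OF assms(2), of "{L1, L2}"] st(1-3) by simp
      with assms(4) have "1 \<le> m" by simp
      with \<open>\<not> cnt (fst s) d < m\<close> have "card ?C \<noteq> 0" unfolding cnt_def by linarith
      then obtain L where "L \<in> fst s" "slope L = d"
        by (metis (mono_tags, lifting) card.empty ex_in_conv mem_Collect_eq)
      with False st(5) \<open>\<not> cnt (fst s) d < m\<close>
      have "3 * m \<le> cnt (fst s) d + cnt (fst s) (slope L1) + cnt (fst s) (slope L2)" by fastforce
      also have "\<dots> \<le> card (fst s)" using cnt_sum_le_card assms(2) False st(4) by metis
      finally show False using assms(4) \<open>1 \<le> m\<close> by simp
    qed
    ultimately show ?thesis by simp
  qed
qed

lemma phase2_length_le:
  assumes "step2\<^sup>*\<^sup>* s t" "final2 (fst t)" "finite (fst s)" "\<forall>L\<in>fst s. is_line L"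
    and "\<forall>d. cnt (fst s) d \<le> m" "card (fst s) \<le> 2 * m"
  shows "length (snd t) + card (fst t) \<le> length (snd s) + m"
  using assms
proof (induction arbitrary: m rule: converse_rtranclp_induct)
  case base
  show ?case
  proof (cases "fst t = {}")
    case False
    then obtain L0 where "L0 \<in> fst t" by blast
    with base.prems card_eq_cnt_if_final2[of "fst t" L0] show ?thesis by simp
  qed simp
next
  case (step s s')
  obtain p L1 L2 where st: "L1 \<in> fst s" "L2 \<in> fst s" "L1 \<noteq> L2"
    "s' = (fst s - {L1, L2}, snd s @ [p])"
    using step.hyps(1) unfolding step2_def by blast
  have "2 \<le> card (fst s)"
    using card_mono[OF step.prems(2), of "{L1, L2}"] st(1-3) by simp
  moreover have "card (fst s') = card (fst s) - 2"
    using st step.prems(2) by (simp add: card_Diff_subset)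
  ultimately have "card (fst s') \<le> 2 * (m - 1)" "1 \<le> m" using step.prems(5) by linarith+
  moreover have "\<forall>d. cnt (fst s') d \<le> m - 1"
    using step2_cnt_le[OF step.hyps(1)] step.prems(2,4,5) by blast
  moreover have "finite (fst s')" "\<forall>L\<in>fst s'. is_line L" using st(4) step.prems(2,3) by auto
  ultimately have "length (snd t) + card (fst t) \<le> length (snd s') + (m - 1)"
    using step.IH step.prems(1) by blast
  with st(4) \<open>1 \<le> m\<close> show ?case by simp
qed

text \<open>Here \<open>n\<close> counts the lines left after the first phase, \<open>b\<close> the triple points missed by an
  optimal hitting set and \<open>K\<close> its points that are not triple points.\<close>

lemma seven_fifths_bound:
  fixes b K n :: nat
  assumes "n + 3 * b \<le> 3 * K" and "n \<le> 2 * K" and "0 < b \<Longrightarrow> 3 \<le> K"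
  shows "5 * (b + max (K - b) ((n + 1) div 2)) \<le> 7 * K"
proof -
  define c where "c = (n + 1) div 2"
  have c: "n \<le> 2 * c" "2 * c \<le> n + 1" unfolding c_def by presburger+
  with assms(2) have "c \<le> K" by linarith
  consider "b = 0" | "5 \<le> K" | "K = 3 \<or> K = 4"
    using assms(3) by linarith
  then have "5 * (b + c) \<le> 7 * K"
    by cases (use c \<open>c \<le> K\<close> assms(1) in auto)
  moreover have "5 * (b + (K - b)) \<le> 7 * K" using assms(1) by simp
  ultimately show ?thesis unfolding c_def[symmetric] by (simp add: max_def)
qed

section \<open>The first phase and an optimal hitting set\<close>

definition lines_at :: "line set \<Rightarrow> point \<Rightarrow> line set" where
  "lines_at S p = {L\<in>S. p \<in> L}"

lemma card_lines_at_le_2_if_final1: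
  assumes "final1 U"
  shows "card (lines_at U p) \<le> 2"
proof (rule ccontr)
  assume "\<not> ?thesis"
  then have "Suc (Suc (Suc 0)) \<le> card (lines_at U p)" by simp
  then obtain L1 L2 L3 where "L1 \<in> lines_at U p" "L2 \<in> lines_at U p" "L3 \<in> lines_at U p"
    "L1 \<noteq> L2" "L1 \<noteq> L3" "L2 \<noteq> L3"
    by (auto simp: card_le_Suc_iff)
  with assms show False unfolding final1_def lines_at_def by blast
qed

locale three_slopes =
  fixes S :: "line set"
  assumes finite_S: "finite S" and is_line_S: "\<forall>L\<in>S. is_line L"
    and card_slopes: "card (slope ` S) \<le> 3"
begin

lemma finite_lines_at: "finite (lines_at S p)"
  using finite_S by (simp add: lines_at_def)

lemma inj_on_slope_lines_at: "inj_on slope (lines_at S p)"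
  using line_eqI_slope is_line_S unfolding lines_at_def inj_on_def by blast

lemma card_lines_at_le: "card (lines_at S p) \<le> 3"
proof -
  have "card (lines_at S p) = card (slope ` lines_at S p)"
    using inj_on_slope_lines_at by (simp add: card_image)
  also have "\<dots> \<le> card (slope ` S)" using finite_S by (intro card_mono) (auto simp: lines_at_def)
  finally show ?thesis using card_slopes by simp
qed

lemma slope_lines_at_eq_if_card_3:
  assumes "card (lines_at S p) = 3"
  shows "slope ` lines_at S p = slope ` S"
proof (rule card_seteq)
  show "slope ` lines_at S p \<subseteq> slope ` S" by (auto simp: lines_at_def)
  show "card (slope ` S) \<le> card (slope ` lines_at S p)"
    using assms card_slopes inj_on_slope_lines_at by (simp add: card_image)
qed (use finite_S in simp)

definition phase1_inv :: "line set \<times> point list \<Rightarrow> bool" where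
  "phase1_inv s \<longleftrightarrow> fst s \<subseteq> S \<and> distinct (snd s) \<and>
     (\<forall>r\<in>set (snd s). card (lines_at S r) = 3 \<and> lines_at S r \<inter> fst s = {}) \<and>
     (\<forall>r\<in>set (snd s). \<forall>r'\<in>set (snd s). r \<noteq> r' \<longrightarrow> lines_at S r \<inter> lines_at S r' = {})"

lemma phase1_inv_step:
  assumes "step1 s t" "phase1_inv s"
  shows "phase1_inv t"
proof -
  obtain p L1 L2 L3 where st: "L1 \<in> fst s" "L2 \<in> fst s" "L3 \<in> fst s"
      "L1 \<noteq> L2" "L1 \<noteq> L3" "L2 \<noteq> L3" "p \<in> L1" "p \<in> L2" "p \<in> L3"
      "t = (fst s - {L1, L2, L3}, snd s @ [p])"
    using assms(1) unfolding step1_def by blast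
  have "{L1, L2, L3} \<subseteq> lines_at S p" using st assms(2) by (auto simp: phase1_inv_def lines_at_def)
  moreover have c3: "card {L1, L2, L3} = 3" using st by simp
  ultimately have p: "lines_at S p = {L1, L2, L3}"
    using card_lines_at_le finite_lines_at by (metis card_seteq)
  have inv: "fst s \<subseteq> S" "distinct (snd s)"
    "\<And>r. r \<in> set (snd s) \<Longrightarrow> card (lines_at S r) = 3"
    "\<And>r. r \<in> set (snd s) \<Longrightarrow> lines_at S r \<inter> fst s = {}"
    "\<And>r r'. r \<in> set (snd s) \<Longrightarrow> r' \<in> set (snd s) \<Longrightarrow> r \<noteq> r' \<Longrightarrow>
       lines_at S r \<inter> lines_at S r' = {}"
    using assms(2) unfolding phase1_inv_def by auto
  have new: "lines_at S p \<subseteq> fst s" using p st(1-3) by simp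
  have "p \<notin> set (snd s)"
  proof
    assume "p \<in> set (snd s)"
    from inv(4)[OF this] new p show False by auto
  qed
  have p_disj: "lines_at S p \<inter> lines_at S r = {}" "lines_at S r \<inter> lines_at S p = {}"
    if "r \<in> set (snd s)" for r
    using inv(4)[OF that] new by auto
  show ?thesis unfolding phase1_inv_def st(10) fst_conv snd_conv
  proof (intro conjI ballI impI)
    show "fst s - {L1, L2, L3} \<subseteq> S" using inv(1) by blast
    show "distinct (snd s @ [p])" using inv(2) \<open>p \<notin> set (snd s)\<close> by simp
    fix r assume r: "r \<in> set (snd s @ [p])"
    then show "card (lines_at S r) = 3" using inv(3) p c3 by (cases "r = p") simp_all
    show "lines_at S r \<inter> (fst s - {L1, L2, L3}) = {}"
    proof (cases "r = p")
      case True
      then show ?thesis unfolding p True by blast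
    next
      case False
      with r inv(4)[of r] show ?thesis by auto
    qed
    fix r' assume r': "r' \<in> set (snd s @ [p])" and "r \<noteq> r'"
    consider "r \<in> set (snd s)" "r' \<in> set (snd s)" | "r = p" "r' \<in> set (snd s)"
      | "r \<in> set (snd s)" "r' = p"
      using r r' \<open>r \<noteq> r'\<close> by auto
    then show "lines_at S r \<inter> lines_at S r' = {}"
      by cases (simp_all add: inv(5) p_disj \<open>r \<noteq> r'\<close>)
  qed
qed

lemma phase1_inv_reach:
  assumes "step1\<^sup>*\<^sup>* (S, []) t"
  shows "phase1_inv t"
  using assms
proof (induction rule: rtranclp_induct)
  case base
  then show ?case by (simp add: phase1_inv_def)
next
  case (step t t')
  then show ?case using phase1_inv_step by blast
qed

end

locale phase1_done = three_slopes +
  fixes U1 :: "line set" and P1 :: "point list" and H :: "point set"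
  assumes phase1: "step1\<^sup>*\<^sup>* (S, []) (U1, P1)" and final1: "final1 U1"
    and hitting: "hitting_set S H"
begin

lemma U1_subset: "U1 \<subseteq> S"
  and distinct_P1: "distinct P1"
  and card_lines_at_P1: "r \<in> set P1 \<Longrightarrow> card (lines_at S r) = 3"
  and lines_at_P1_disjoint_U1: "r \<in> set P1 \<Longrightarrow> lines_at S r \<inter> U1 = {}"
  and lines_at_P1_disjoint:
    "r \<in> set P1 \<Longrightarrow> r' \<in> set P1 \<Longrightarrow> r \<noteq> r' \<Longrightarrow> lines_at S r \<inter> lines_at S r' = {}"
  using phase1_inv_reach[OF phase1] unfolding phase1_inv_def by auto

lemma finite_U1: "finite U1"
  using U1_subset finite_S finite_subset by blast

lemma finite_H: "finite H"
  using hitting unfolding hitting_set_def by blast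

definition hitter :: "line \<Rightarrow> point" where
  "hitter L = (SOME p. p \<in> H \<and> p \<in> L)"

lemma hitter: "L \<in> S \<Longrightarrow> hitter L \<in> H \<and> hitter L \<in> L"
  using hitting unfolding hitting_set_def hitter_def by (metis (mono_tags, lifting) someI_ex)

lemma in_lines_at_hitter: "L \<in> S \<Longrightarrow> L \<in> lines_at S (hitter L)"
  using hitter by (simp add: lines_at_def)

lemma hitter_notin_P1_if_unhit:
  assumes "L \<in> U1"
  shows "hitter L \<notin> set P1"
  using assms lines_at_P1_disjoint_U1 in_lines_at_hitter U1_subset by blast

lemma hitter_notin_P1_if_missed:
  assumes "r \<in> set P1 - H" "L \<in> lines_at S r"
  shows "hitter L \<notin> set P1"
proof
  assume "hitter L \<in> set P1"
  have "L \<in> S" using assms(2) by (simp add: lines_at_def)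
  then have "hitter L \<noteq> r" using hitter assms(1) by blast
  with \<open>hitter L \<in> set P1\<close> assms have "lines_at S r \<inter> lines_at S (hitter L) = {}"
    using lines_at_P1_disjoint by blast
  with assms(2) in_lines_at_hitter[OF \<open>L \<in> S\<close>] show False by blast
qed

lemma card_U1_add_missed_le: "card U1 + 3 * card (set P1 - H) \<le> 3 * card (H - set P1)"
proof -
  define X where "X = U1 \<union> (\<Union>r\<in>set P1 - H. lines_at S r)"
  have "card (\<Union>r\<in>set P1 - H. lines_at S r) = (\<Sum>r\<in>set P1 - H. card (lines_at S r))"
    using finite_lines_at lines_at_P1_disjoint by (intro card_UN_disjoint) auto
  also have "\<dots> = 3 * card (set P1 - H)" using card_lines_at_P1 by simp
  moreover have "U1 \<inter> (\<Union>r\<in>set P1 - H. lines_at S r) = {}"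
    using lines_at_P1_disjoint_U1 by blast
  ultimately have "card X = card U1 + 3 * card (set P1 - H)"
    unfolding X_def using finite_U1 finite_lines_at by (simp add: card_Un_disjoint)
  moreover have "card X \<le> 3 * card (H - set P1)"
  proof (rule card_le_mult_card_if_covered)
    show "X \<subseteq> (\<Union>p\<in>H - set P1. lines_at S p)"
    proof
      fix L assume "L \<in> X"
      then consider "L \<in> U1" | r where "r \<in> set P1 - H" "L \<in> lines_at S r"
        unfolding X_def by blast
      then have "L \<in> S \<and> hitter L \<notin> set P1"
        by cases (use U1_subset hitter_notin_P1_if_unhit hitter_notin_P1_if_missed in
            \<open>auto simp: lines_at_def\<close>)
      then show "L \<in> (\<Union>p\<in>H - set P1. lines_at S p)"
        using hitter in_lines_at_hitter by (intro UN_I[of "hitter L"]) simp_all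
    qed
  qed (use finite_H finite_lines_at card_lines_at_le in auto)
  ultimately show ?thesis by simp
qed

lemma card_U1_le: "card U1 \<le> 2 * card (H - set P1)"
proof (rule card_le_mult_card_if_covered)
  show "U1 \<subseteq> (\<Union>p\<in>H - set P1. lines_at U1 p)"
  proof
    fix L assume "L \<in> U1"
    then have "L \<in> S" "hitter L \<notin> set P1" using U1_subset hitter_notin_P1_if_unhit by auto
    with \<open>L \<in> U1\<close> show "L \<in> (\<Union>p\<in>H - set P1. lines_at U1 p)"
      using hitter by (intro UN_I[of "hitter L"]) (simp_all add: lines_at_def)
  qed
qed (use finite_H finite_U1 card_lines_at_le_2_if_final1[OF final1] in \<open>auto simp: lines_at_def\<close>)

lemma card_H_diff_ge_3_if_missed:
  assumes "r \<in> set P1 - H"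
  shows "3 \<le> card (H - set P1)"
proof -
  have "inj_on hitter (lines_at S r)"
  proof (rule inj_onI)
    fix L L' assume "L \<in> lines_at S r" "L' \<in> lines_at S r" and eq: "hitter L = hitter L'"
    then have L: "L \<in> S" "r \<in> L" and L': "L' \<in> S" "r \<in> L'" by (simp_all add: lines_at_def)
    have "hitter L \<noteq> r" using hitter[OF L(1)] assms by auto
    moreover have "hitter L \<in> L" "hitter L \<in> L'" using hitter L(1) L'(1) eq by metis+
    ultimately show "L = L'"
      using line_eqI_two_points[of L L' r "hitter L"] is_line_S L L' by simp
  qed
  moreover have "hitter ` lines_at S r \<subseteq> H - set P1"
  proof (rule image_subsetI)
    fix L assume "L \<in> lines_at S r"
    then show "hitter L \<in> H - set P1"
      using hitter hitter_notin_P1_if_missed[OF assms] by (simp add: lines_at_def)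
  qed
  ultimately have "card (lines_at S r) \<le> card (H - set P1)"
    using finite_H by (intro card_inj_on_le) auto
  then show ?thesis using card_lines_at_P1 assms by simp
qed

text \<open>The lines of slope \<open>d\<close> are hit by distinct points of \<open>H\<close>, and each triple point carries
  one of them that is no longer unhit.\<close>

lemma cnt_U1_le: "cnt U1 d \<le> card H - length P1"
proof (cases "d \<in> slope ` S")
  case True
  define C where "C = {L\<in>S. slope L = d}"
  have "inj_on hitter C"
  proof (rule inj_onI)
    fix L L' assume "L \<in> C" "L' \<in> C" and eq: "hitter L = hitter L'"
    then have "L \<in> S" "L' \<in> S" "slope L = slope L'" by (simp_all add: C_def)
    moreover have "hitter L \<in> L" "hitter L \<in> L'"
      using hitter[OF \<open>L \<in> S\<close>] hitter[OF \<open>L' \<in> S\<close>] eq by simp_all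
    ultimately show "L = L'" using line_eqI_slope is_line_S by blast
  qed
  moreover have "hitter ` C \<subseteq> H"
    by (rule image_subsetI) (use hitter in \<open>simp add: C_def\<close>)
  ultimately have "card C \<le> card H" using finite_H by (intro card_inj_on_le)
  have "\<forall>r\<in>set P1. \<exists>L. L \<in> lines_at S r \<and> slope L = d"
  proof
    fix r assume "r \<in> set P1"
    then have "d \<in> slope ` lines_at S r"
      using slope_lines_at_eq_if_card_3[OF card_lines_at_P1] True by simp
    then obtain L where "L \<in> lines_at S r" "d = slope L" by (rule imageE)
    then show "\<exists>L. L \<in> lines_at S r \<and> slope L = d" by (intro exI[of _ L]) simp
  qed
  from bchoice[OF this] obtain \<phi>
    where \<phi>: "\<forall>r\<in>set P1. \<phi> r \<in> lines_at S r \<and> slope (\<phi> r) = d" ..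
  have "inj_on \<phi> (set P1)"
  proof (rule inj_onI)
    fix r r' assume r: "r \<in> set P1" "r' \<in> set P1" and eq: "\<phi> r = \<phi> r'"
    from \<phi> r have "\<phi> r \<in> lines_at S r" "\<phi> r' \<in> lines_at S r'" by simp_all
    with eq have "\<phi> r \<in> lines_at S r \<inter> lines_at S r'" by simp
    then show "r = r'" using lines_at_P1_disjoint[OF r] by (metis empty_iff)
  qed
  moreover have "\<phi> ` set P1 \<subseteq> C - U1"
  proof (rule image_subsetI)
    fix r assume "r \<in> set P1"
    with \<phi> have "\<phi> r \<in> lines_at S r" "slope (\<phi> r) = d" by simp_all
    with lines_at_P1_disjoint_U1[OF \<open>r \<in> set P1\<close>] show "\<phi> r \<in> C - U1"
      unfolding C_def lines_at_def by blast
  qed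
  ultimately have "card (set P1) \<le> card (C - U1)"
    using finite_S by (intro card_inj_on_le) (simp_all add: C_def)
  then have "length P1 \<le> card (C - U1)" using distinct_P1 by (simp add: distinct_card)
  moreover have "C \<inter> U1 = {L\<in>U1. slope L = d}" using U1_subset unfolding C_def by blast
  then have "card C = cnt U1 d + card (C - U1)"
    using finite_S card_Int_Diff[of C U1] unfolding C_def cnt_def by simp
  ultimately show ?thesis using \<open>card C \<le> card H\<close> by linarith
next
  case False
  then have "{L\<in>U1. slope L = d} = {}" using U1_subset by blast
  then show ?thesis unfolding cnt_def by (simp only: card.empty)
qed

lemma greedy_count_bound:
  assumes "step2\<^sup>*\<^sup>* (U1, P1) (U2, P2)" "final2 U2"
  shows "5 * (length P2 + card U2) \<le> 7 * card H"
proof -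
  define b K where "b = card (set P1 - H)" and "K = card (H - set P1)"
  define m where "m = max (K - b) ((card U1 + 1) div 2)"
  have "length P1 = card (set P1 \<inter> H) + b"
    using distinct_P1 card_Int_Diff[of "set P1" H] unfolding b_def by (simp add: distinct_card)
  moreover have "card H = card (set P1 \<inter> H) + K"
    using finite_H card_Int_Diff[of H "set P1"] unfolding K_def by (simp add: Int_commute)
  ultimately have "cnt U1 d \<le> m" for d using cnt_U1_le[of d] unfolding m_def by simp
  then have "length P2 + card U2 \<le> length P1 + m"
    using phase2_length_le[of "(U1, P1)" "(U2, P2)" m] assms finite_U1 is_line_S U1_subset
    unfolding m_def by fastforce
  moreover have "5 * (b + m) \<le> 7 * K"
    unfolding m_def b_def K_def
  proof (rule seven_fifths_bound)
    show "card U1 + 3 * card (set P1 - H) \<le> 3 * card (H - set P1)" by (rule card_U1_add_missed_le)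
    show "card U1 \<le> 2 * card (H - set P1)" by (rule card_U1_le)
    show "3 \<le> card (H - set P1)" if "0 < card (set P1 - H)"
      using that card_H_diff_ge_3_if_missed by (metis card.empty ex_in_conv less_irrefl)
  qed
  ultimately show ?thesis
    using \<open>length P1 = _\<close> \<open>card H = _\<close> by (simp add: distrib_left)
qed

end

lemma hitting_number_attained:
  assumes "finite S" "\<forall>L\<in>S. is_line L"
  obtains H where "hitting_set S H" "card H = hitting_number S"
proof -
  have "hitting_set S ((\<lambda>L. SOME p. p \<in> L) ` S)"
    using assms line_nonempty unfolding hitting_set_def by (metis imageI someI_ex finite_imageI)
  then have "\<exists>k H. hitting_set S H \<and> card H = k" by blast
  then have "\<exists>H. hitting_set S H \<and> card H = hitting_number S"
    unfolding hitting_number_def by (rule LeastI_ex)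
  with that show thesis by blast
qed

theorem mainTheorem4:
  fixes S :: "line set" and pts :: "point list"
  assumes "finite S"
    and "\<forall>L\<in>S. is_line L"
    and "card (slope ` S) \<le> 3"
    and "greedy_output S pts"
  shows "real (length pts) \<le> 7 / 5 * real (hitting_number S)"
proof -
  obtain U1 P1 U2 P2 and f :: "line \<Rightarrow> point" and xs where
    phase1: "step1\<^sup>*\<^sup>* (S, []) (U1, P1)" "final1 U1" and
    phase2: "step2\<^sup>*\<^sup>* (U1, P1) (U2, P2)" "final2 U2" and
    phase3: "distinct xs" "set xs = U2" "pts = P2 @ map f xs"
    using assms(4) unfolding greedy_output_def by blast
  obtain H where H: "hitting_set S H" "card H = hitting_number S"
    using hitting_number_attained assms(1,2) by blast
  interpret phase1_done S U1 P1 H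
    using assms(1-3) phase1 H(1) by unfold_locales
  have "length pts = length P2 + card U2" using distinct_card[OF phase3(1)] phase3(2,3) by simp
  with greedy_count_bound[OF phase2] H(2) show ?thesis by simp
qed

end
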